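(* Let $L\ge 1$, $N=2^L$, and let $\mathbb{F}_q$ be a finite field of odd characteristic. For $i\in\{1,\ldots,L\}$ let $\mathbf{V}_i$ be the $N\times\frac{N}{2}$ matrix whose columns are the elements of $\mathcal{V}_i=\left\{\prod_{s=1,s\ne i}^{L}\mathbf{X}_s^{x_s}\mathbf{w} : x_s\in\{0,1\}\right\}$. Then for any $i,j\in\{1,\ldots,L\}$, $$\mathrm{rank}\big([\mathbf{V}_i\ \ \mathbf{X}_j\mathbf{V}_i]\big)=\big|\mathcal{L}(\mathbf{V}_i)\cup\mathcal{L}(\mathbf{X}_j\mathbf{V}_i)\big|=\begin{cases}N,& i=j,\\ \frac{N}{2},& i\ne j.\end{cases}$$
   Context: $\mathbf{X}_s=\mathbf{I}_{2^{s-1}}\otimes\mathrm{blkdiag}\big(\mathbf{I}_{N/2^s},-\mathbf{I}_{N/2^s}\big)$ for $s\in\{1,\ldots,L\}$ (diagonal $N\times N$ with entries $\pm1$, so $\mathbf{X}_s^2=\mathbf{I}_N$ and the $\mathbf{X}_s$ commute); $\mathbf{w}$ is the all-ones vector of length $N$. Lattice representation: every matrix whose columns are vectors of the form $\prod_{s=1}^L\mathbf{X}_s^{x_s}\mathbf{w}$ with $(x_1,\ldots,x_L)\in\{0,1\}^L$ is mapped by $\mathcal{L}$ to the set of exponent vectors $(x_1,\ldots,x_L)$ of its columns (exponents taken mod $2$, since $\mathbf{X}_s^2=\mathbf{I}_N$). Thus $\mathcal{L}(\mathbf{X}_j\mathbf{V}_i)=\{x+e_j \bmod 2 : x\in\mathcal{L}(\mathbf{V}_i)\}$,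 with $e_j$ the $j$-th unit vector. *)

theory Defs
  imports "Jordan_Normal_Form.DL_Rank"
begin

text \<open>Row/column indices of JNF matrices are 0-based; the index s of X_s is 1-based
  (s \<in> {1..L}). An exponent vector (x_1,...,x_L) \<in> {0,1}^L is a list xs of length L with
  entries in {0,1}, where x_s = xs ! (s-1).\<close>

definition Xmat :: "nat \<Rightarrow> nat \<Rightarrow> 'a::ring_1 mat" where
  "Xmat L s = mat (2^L) (2^L)
     (\<lambda>(r,c). if r = c then (if even (r div (2^L div 2^s)) then 1 else -1) else 0)"
  \<comment> \<open>X_s = I_{2^(s-1)} \<otimes> blkdiag(I_{N/2^s}, -I_{N/2^s})\<close>

definition wvec :: "nat \<Rightarrow> 'a::ring_1 vec" where
  "wvec L = vec (2^L) (\<lambda>_. 1)"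

definition expvecs :: "nat \<Rightarrow> nat list set" where
  "expvecs L = {xs. length xs = L \<and> set xs \<subseteq> {0,1}}"

definition prodX :: "nat \<Rightarrow> nat list \<Rightarrow> 'a::ring_1 mat" where
  "prodX L xs = foldr (\<lambda>s M. (Xmat L s ^\<^sub>m (xs ! (s - 1))) * M) [1..<L+1] (1\<^sub>m (2^L))"

definition colv :: "nat \<Rightarrow> nat list \<Rightarrow> 'a::ring_1 vec" where
  "colv L xs = prodX L xs *\<^sub>v wvec L"

definition Vset :: "nat \<Rightarrow> nat \<Rightarrow> 'a::ring_1 vec set" where
  "Vset L i = {colv L xs | xs. xs \<in> expvecs L \<and> xs ! (i - 1) = 0}"

text \<open>Lattice representation: the set of exponent vectors of the columns of a matrix.\<close>
definition latt :: "nat \<Rightarrow> 'a::ring_1 mat \<Rightarrow> nat list set" where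
  "latt L M = {xs \<in> expvecs L. colv L xs \<in> set (cols M)}"

definition hcat :: "'a mat \<Rightarrow> 'a mat \<Rightarrow> 'a mat" where
  "hcat A B = mat_of_cols (dim_row A) (cols A @ cols B)"

end

theory Submission
  imports Defs "HOL-Library.Disjoint_Sets"
begin

text \<open>All the X_s are diagonal, so the column indexed by an exponent vector x is the Walsh vector
  r \<mapsto> \<Prod>_s ((-1)^{bit_{L-s} r})^{x_s}. Walsh vectors of distinct exponent vectors are orthogonal
  (flipping the bit of r at a coordinate where they differ negates the summand) and have squared
  norm 2^L, which is nonzero in odd characteristic; hence distinct columns are linearly independent
  and the rank counts the exponent vectors occurring. Multiplication by X_j flips x_j, and the
  columns of V_i are those with x_i = 0: for i = j flipping yields exactly the complement, while for
  i \<noteq> j it permutes the columns.\<close>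

lemma two_neq_zero_if_odd_CHAR:
  assumes "odd CHAR('a::semiring_1)"
  shows "(2::'a) \<noteq> 0"
proof
  assume "(2::'a) = 0"
  then have "CHAR('a) dvd 2"
    using of_nat_eq_0_iff_char_dvd[where 'a='a, of 2] by simp
  with assms have "CHAR('a) = 1"
    by (metis dvd_add_triv_right_iff even_add gcd_nat.trans nat_dvd_1_iff_1)
  with CHAR_not_1' show False by simp
qed

lemma mat_diag_pow: "mat_diag n f ^\<^sub>m k = mat_diag n (\<lambda>r. f r ^ k :: 'a::comm_semiring_1)"
proof (induction k)
  case 0
  show ?case by (simp add: mat_diag_def)
next
  case (Suc k)
  then show ?case by (simp add: mult.commute)
qed

lemma mat_diag_mult_vec:
  assumes "v \<in> carrier_vec n"
  shows "mat_diag n f *\<^sub>v v = vec n (\<lambda>r. f r * v $ r :: 'a::semiring_0)"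
proof (rule eq_vecI)
  fix r assume "r < dim_vec (vec n (\<lambda>r. f r * v $ r))"
  then have r: "r < n" by simp
  have "(mat_diag n f *\<^sub>v v) $ r = (\<Sum>k\<in>{0..<n}. (if r = k then f k else 0) * v $ k)"
    using r assms by (simp add: mat_diag_def scalar_prod_def row_def)
  also have "\<dots> = (\<Sum>k\<in>{0..<n}. if k = r then f r * v $ r else 0)"
    by (intro sum.cong) auto
  also have "\<dots> = f r * v $ r"
    using r by simp
  finally show "(mat_diag n f *\<^sub>v v) $ r = vec n (\<lambda>r. f r * v $ r) $ r"
    using r by simp
qed (simp add: mat_diag_def)

lemma set_cols_mult:
  assumes "X \<in> carrier_mat n n" "V \<in> carrier_mat n nc"
  shows "set (cols (X * V)) = (\<lambda>v. X *\<^sub>v v) ` set (cols V)"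
proof -
  have "set (cols (X * V)) = col (X * V) ` {0..<nc}"
    using assms by (simp add: cols_def)
  also have "\<dots> = (\<lambda>k. X *\<^sub>v col V k) ` {0..<nc}"
    using assms by (intro image_cong) (auto simp: col_mult2)
  also have "\<dots> = (\<lambda>v. X *\<^sub>v v) ` set (cols V)"
    using assms by (auto simp: cols_def)
  finally show ?thesis .
qed

lemma set_cols_hcat:
  assumes "A \<in> carrier_mat n na" "B \<in> carrier_mat n nb"
  shows "set (cols (hcat A B)) = set (cols A) \<union> set (cols B)"
  unfolding hcat_def using assms by (subst cols_mat_of_cols) (auto simp: cols_def)

lemma hcat_carrier_mat:
  assumes "A \<in> carrier_mat n na" "B \<in> carrier_mat n nb"
  shows "hcat A B \<in> carrier_mat n (na + nb)"
  unfolding hcat_def using assms by auto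

lemma (in vec_space) lin_indpt_orthogonal:
  assumes S: "S \<subseteq> carrier_vec n" and fin: "finite S"
    and orth: "\<And>u w. u \<in> S \<Longrightarrow> w \<in> S \<Longrightarrow> u \<noteq> w \<Longrightarrow> u \<bullet> w = 0"
    and nonisotropic: "\<And>w. w \<in> S \<Longrightarrow> w \<bullet> w \<noteq> 0"
  shows "lin_indpt S"
proof
  assume "lin_dep S"
  then obtain a v where lc: "lincomb a S = 0\<^sub>v n" and v: "v \<in> S" and av: "a v \<noteq> 0"
    using finite_lin_dep[OF fin _ S] by auto
  have vc: "v \<in> carrier_vec n" using v S by auto
  have "0 = lincomb a S \<bullet> v" using lc vc by simp
  also have "\<dots> = (\<Sum>i\<in>{0..<n}. (\<Sum>x\<in>S. a x * x $ i) * v $ i)"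
    unfolding scalar_prod_def using lincomb_index[OF _ S] vc by simp
  also have "\<dots> = (\<Sum>x\<in>S. a x * (x \<bullet> v))"
    unfolding scalar_prod_def using vc
    by (simp add: sum_distrib_right sum_distrib_left mult.assoc sum.swap[of _ S])
  also have "\<dots> = a v * (v \<bullet> v)"
    using fin v orth by (simp add: sum.remove)
  finally show False using av nonisotropic[OF v] by simp
qed

lemma (in vec_space) rank_eq_card_cols_if_lin_indpt:
  assumes "A \<in> carrier_mat n nc" and "lin_indpt (set (cols A))"
  shows "rank A = card (set (cols A))"
  by (rule rank_card_indpt[OF assms(1)]) (use assms(2) in \<open>auto simp: maximal_def\<close>)

lemma expvecs_eq_lists: "expvecs L = {xs. set xs \<subseteq> {0, 1} \<and> length xs = L}"
  by (auto simp: expvecs_def)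

lemma finite_expvecs: "finite (expvecs L)"
  by (simp add: expvecs_eq_lists finite_lists_length_eq)

lemma card_expvecs: "card (expvecs L) = 2 ^ L"
  by (simp add: expvecs_eq_lists card_lists_length_eq numeral_2_eq_2)

definition flip_exp :: "nat \<Rightarrow> nat list \<Rightarrow> nat list" where
  "flip_exp j xs = xs[j - 1 := 1 - xs ! (j - 1)]"

definition expvecs_zero :: "nat \<Rightarrow> nat \<Rightarrow> nat list set" where
  "expvecs_zero L i = {xs \<in> expvecs L. xs ! (i - 1) = 0}"

lemma expvecs_nth_01:
  assumes "xs \<in> expvecs L" "j \<in> {1..L}"
  shows "xs ! (j - 1) = 0 \<or> xs ! (j - 1) = 1"
proof -
  have "xs ! (j - 1) \<in> set xs"
    using assms by (intro nth_mem) (auto simp: expvecs_def)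
  then show ?thesis
    using assms by (auto simp: expvecs_def)
qed

lemma flip_exp_in_expvecs: "xs \<in> expvecs L \<Longrightarrow> j \<in> {1..L} \<Longrightarrow> flip_exp j xs \<in> expvecs L"
  unfolding expvecs_def flip_exp_def using set_update_subset_insert by fastforce

lemma nth_flip_exp:
  "xs \<in> expvecs L \<Longrightarrow> j \<in> {1..L} \<Longrightarrow> k < L \<Longrightarrow>
    flip_exp j xs ! k = (if k = j - 1 then 1 - xs ! k else xs ! k)"
  by (auto simp: flip_exp_def expvecs_def nth_list_update)

lemma flip_exp_flip_exp:
  assumes xs: "xs \<in> expvecs L" and j: "j \<in> {1..L}"
  shows "flip_exp j (flip_exp j xs) = xs"
proof -
  have "xs ! (j - 1) = 0 \<or> xs ! (j - 1) = 1"
    using expvecs_nth_01[OF xs j] .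
  then have "1 - (1 - xs ! (j - 1)) = xs ! (j - 1)"
    by auto
  moreover have "j - 1 < length xs"
    using j xs by (auto simp: expvecs_def)
  ultimately show ?thesis
    by (simp add: flip_exp_def)
qed

lemma expvecs_zero_subset: "expvecs_zero L i \<subseteq> expvecs L"
  by (auto simp: expvecs_zero_def)

lemma image_flip_exp_expvecs_zero:
  assumes i: "i \<in> {1..L}" and j: "j \<in> {1..L}" and "i \<noteq> j"
  shows "flip_exp j ` expvecs_zero L i = expvecs_zero L i"
proof -
  have into: "flip_exp j xs \<in> expvecs_zero L i" if "xs \<in> expvecs_zero L i" for xs
    using that i j \<open>i \<noteq> j\<close> by (auto simp: expvecs_zero_def flip_exp_in_expvecs nth_flip_exp)
  have "xs \<in> flip_exp j ` expvecs_zero L i" if "xs \<in> expvecs_zero L i" for xs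
    using into[OF that] flip_exp_flip_exp[of xs L j] that j
    by (metis expvecs_zero_subset image_eqI subsetD)
  with into show ?thesis by blast
qed

lemma expvecs_zero_Un_flip_exp:
  assumes i: "i \<in> {1..L}"
  shows "expvecs_zero L i \<union> flip_exp i ` expvecs_zero L i = expvecs L"
proof -
  have "xs \<in> flip_exp i ` expvecs_zero L i" if xs: "xs \<in> expvecs L" "xs ! (i - 1) = 1" for xs
  proof
    show "xs = flip_exp i (flip_exp i xs)"
      using flip_exp_flip_exp[OF xs(1) i] by simp
    show "flip_exp i xs \<in> expvecs_zero L i"
      using xs i by (auto simp: expvecs_zero_def flip_exp_in_expvecs nth_flip_exp)
  qed
  then show ?thesis
    using i expvecs_nth_01[of _ L i] expvecs_zero_subset[of L i] flip_exp_in_expvecs[of _ L i]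
    by (fastforce simp: expvecs_zero_def)
qed

lemma card_expvecs_zero_Un_flip_exp:
  assumes i: "i \<in> {1..L}" and j: "j \<in> {1..L}"
  shows "card (expvecs_zero L i \<union> flip_exp j ` expvecs_zero L i) = (if i = j then 2^L else 2^L div 2)"
proof -
  let ?Z = "expvecs_zero L i"
  have fin: "finite ?Z"
    using expvecs_zero_subset finite_expvecs finite_subset by blast
  have disjoint: "?Z \<inter> flip_exp i ` ?Z = {}"
    using i by (auto simp: expvecs_zero_def nth_flip_exp)
  have "card (flip_exp i ` ?Z) = card ?Z"
    by (intro card_image inj_onI)
      (metis expvecs_zero_subset flip_exp_flip_exp[OF _ i] subsetD)
  then have "card ?Z + card ?Z = 2^L"
    using card_Un_disjoint[OF fin finite_imageI[OF fin] disjoint] card_expvecs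
    by (simp add: expvecs_zero_Un_flip_exp[OF i])
  then show ?thesis
    using image_flip_exp_expvecs_zero[OF i j] expvecs_zero_Un_flip_exp[OF i] card_expvecs
    by (cases "i = j") auto
qed

definition bit_sign :: "nat \<Rightarrow> nat \<Rightarrow> 'a::ring_1" where
  "bit_sign k r = (if bit r k then -1 else 1)"

lemma bit_sign_square: "bit_sign k r * bit_sign k r = 1"
  by (simp add: bit_sign_def)

lemma bit_sign_flip_bit:
  "bit_sign k (flip_bit m r) = (if k = m then - bit_sign k r else bit_sign k r)"
  by (auto simp: bit_sign_def bit_flip_bit_iff)

text \<open>The Walsh character of the exponent vector xs; coordinate s of xs pairs with bit L - s of
  the row index, matching the block structure of X_s.\<close>
definition walsh :: "nat \<Rightarrow> nat list \<Rightarrow> nat \<Rightarrow> 'a::comm_ring_1" where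
  "walsh L xs r = (\<Prod>s\<in>{1..L}. bit_sign (L - s) r ^ (xs ! (s - 1)))"

lemma Xmat_eq_mat_diag: "s \<le> L \<Longrightarrow> Xmat L s = mat_diag (2^L) (bit_sign (L - s))"
  unfolding Xmat_def mat_diag_def bit_sign_def
  by (rule eq_matI) (auto simp: power_diff bit_nat_def)

lemma Xmat_carrier_mat: "s \<le> L \<Longrightarrow> Xmat L s \<in> carrier_mat (2^L) (2^L)"
  by (simp add: Xmat_eq_mat_diag)

lemma foldr_Xmat_pow_eq_mat_diag:
  assumes "\<forall>s\<in>set ss. s \<le> L"
  shows "foldr (\<lambda>s M. (Xmat L s ^\<^sub>m (xs ! (s - 1))) * M) ss (1\<^sub>m (2^L))
     = mat_diag (2^L) (\<lambda>r. \<Prod>s\<leftarrow>ss. bit_sign (L - s) r ^ (xs ! (s - 1)) :: 'a::comm_ring_1)"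
  using assms
  by (induction ss)
    (simp_all add: Xmat_eq_mat_diag mat_diag_pow mat_diag_one[symmetric] del: mat_diag_one)

lemma prodX_eq_mat_diag: "prodX L xs = mat_diag (2^L) (walsh L xs)"
proof -
  have "(\<Prod>s\<leftarrow>[1..<L+1]. f s) = (\<Prod>s\<in>{1..L}. f s)" for f :: "nat \<Rightarrow> 'a"
  proof -
    have "(\<Prod>s\<leftarrow>[1..<L+1]. f s) = (\<Prod>s\<in>set [1..<L+1]. f s)"
      by (simp only: prod.distinct_set_conv_list distinct_upt)
    also have "set [1..<L+1] = {1..L}" by auto
    finally show ?thesis .
  qed
  then show ?thesis
    unfolding prodX_def walsh_def by (subst foldr_Xmat_pow_eq_mat_diag) auto
qed

lemma colv_eq_walsh: "colv L xs = vec (2^L) (walsh L xs)"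
  unfolding colv_def wvec_def prodX_eq_mat_diag by (subst mat_diag_mult_vec) auto

lemma colv_carrier_vec: "(colv L xs :: 'a::comm_ring_1 vec) \<in> carrier_vec (2^L)"
  by (simp add: colv_eq_walsh)

lemma inner_colv:
  "(colv L xs :: 'a::comm_ring_1 vec) \<bullet> colv L ys = (\<Sum>r<2^L. walsh L xs r * walsh L ys r)"
  by (simp add: colv_eq_walsh scalar_prod_def atLeast0LessThan)

lemma walsh_square: "walsh L xs r * walsh L xs r = 1"
proof -
  have "walsh L xs r * walsh L xs r
      = (\<Prod>s\<in>{1..L}. (bit_sign (L - s) r * bit_sign (L - s) r) ^ (xs ! (s - 1)))"
    unfolding walsh_def prod.distrib[symmetric] power_mult_distrib ..
  then show ?thesis
    by (simp add: bit_sign_square)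
qed

lemma walsh_remove:
  assumes "j \<in> {1..L}"
  shows "walsh L xs r
    = bit_sign (L - j) r ^ (xs ! (j - 1)) * (\<Prod>s\<in>{1..L} - {j}. bit_sign (L - s) r ^ (xs ! (s - 1)))"
  unfolding walsh_def using assms by (intro prod.remove) auto

lemma walsh_flip_bit:
  assumes j: "j \<in> {1..L}"
  shows "walsh L xs (flip_bit (L - j) r) = (-1) ^ (xs ! (j - 1)) * walsh L xs r"
proof -
  have other: "(\<Prod>s\<in>{1..L} - {j}. bit_sign (L - s) (flip_bit (L - j) r) ^ (xs ! (s - 1)))
      = (\<Prod>s\<in>{1..L} - {j}. bit_sign (L - s) r ^ (xs ! (s - 1)))"
    by (rule prod.cong) (use j in \<open>auto simp: bit_sign_flip_bit\<close>)
  have "(- bit_sign (L - j) r) ^ (xs ! (j - 1))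
      = (-1) ^ (xs ! (j - 1)) * (bit_sign (L - j) r :: 'a) ^ (xs ! (j - 1))"
    by (rule power_minus)
  then show ?thesis
    unfolding walsh_remove[OF j, of xs] other
    by (simp add: bit_sign_flip_bit mult.assoc)
qed

lemma walsh_flip_exp:
  assumes xs: "xs \<in> expvecs L" and j: "j \<in> {1..L}"
  shows "walsh L (flip_exp j xs) r = bit_sign (L - j) r * walsh L xs r"
proof -
  let ?b = "bit_sign (L - j) r :: 'a"
  have other: "(\<Prod>s\<in>{1..L} - {j}. bit_sign (L - s) r ^ (flip_exp j xs ! (s - 1)))
      = (\<Prod>s\<in>{1..L} - {j}. bit_sign (L - s) r ^ (xs ! (s - 1)))"
    by (rule prod.cong) (use xs j in \<open>auto simp: nth_flip_exp\<close>)
  have "xs ! (j - 1) = 0 \<or> xs ! (j - 1) = 1"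
    using expvecs_nth_01[OF xs j] .
  then have "?b ^ (1 - xs ! (j - 1)) = ?b * ?b ^ (xs ! (j - 1))"
    using bit_sign_square[of "L - j" r] by auto
  moreover have "flip_exp j xs ! (j - 1) = 1 - xs ! (j - 1)"
    using nth_flip_exp[OF xs j, of "j - 1"] j by auto
  ultimately show ?thesis
    unfolding walsh_remove[OF j, of "flip_exp j xs"] walsh_remove[OF j, of xs] other
    by (simp add: mult.assoc)
qed

lemma walsh_orthogonal:
  assumes xs: "xs \<in> expvecs L" and ys: "ys \<in> expvecs L" and ne: "xs \<noteq> ys"
  shows "(\<Sum>r<2^L. walsh L xs r * walsh L ys r) = 0"
proof -
  have "length xs = L" "length ys = L"
    using xs ys by (auto simp: expvecs_def)
  then obtain k where k: "k < L" "xs ! k \<noteq> ys ! k"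
    using ne nth_equalityI by metis
  define j where "j = Suc k"
  have j: "j \<in> {1..L}" using k by (simp add: j_def)
  have "xs ! (j - 1) \<noteq> ys ! (j - 1)"
    using k by (simp add: j_def)
  then have one: "xs ! (j - 1) + ys ! (j - 1) = 1"
    using expvecs_nth_01[OF xs j] expvecs_nth_01[OF ys j] by auto
  let ?h = "flip_bit (L - j)"
  show ?thesis
  proof (rule sum_involution_eq_0[where h = ?h])
    fix r :: nat
    have "walsh L xs (?h r) * walsh L ys (?h r)
        = (-1) ^ (xs ! (j - 1) + ys ! (j - 1)) * (walsh L xs r * walsh L ys r :: 'a)"
      by (simp add: walsh_flip_bit[OF j] power_add mult_ac)
    then show "walsh L xs (?h r) * walsh L ys (?h r) + walsh L xs r * walsh L ys r = (0::'a)"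
      using one by simp
    assume r: "r \<in> {..<2^L}"
    have "L - j < L"
      using j by auto
    with r show "?h r \<in> {..<2^L}"
      by (simp add: take_bit_nat_eq_self_iff[symmetric] take_bit_flip_bit_eq)
    show "?h (?h r) = r"
      by (rule bit_eqI) (auto simp: bit_flip_bit_iff)
    have "bit (?h r) (L - j) \<noteq> bit r (L - j)"
      by (simp add: bit_flip_bit_iff)
    then show "?h r \<noteq> r"
      by auto
  qed
qed

lemma Xmat_mult_colv:
  assumes "xs \<in> expvecs L" "j \<in> {1..L}"
  shows "Xmat L j *\<^sub>v colv L xs = (colv L (flip_exp j xs) :: 'a::comm_ring_1 vec)"
  using assms by (auto simp: Xmat_eq_mat_diag colv_eq_walsh mat_diag_mult_vec walsh_flip_exp)

lemma set_cols_Xmat_mult: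
  assumes j: "j \<in> {1..L}" and V: "V \<in> carrier_mat (2^L) nc"
    and E: "E \<subseteq> expvecs L" and cols: "set (cols V) = colv L ` E"
  shows "set (cols (Xmat L j * V)) = (colv L ` flip_exp j ` E :: 'a::comm_ring_1 vec set)"
proof -
  have X: "Xmat L j \<in> carrier_mat (2^L) (2^L)"
    using j by (simp add: Xmat_carrier_mat)
  have "set (cols (Xmat L j * V)) = (\<lambda>xs. Xmat L j *\<^sub>v colv L xs) ` E"
    unfolding set_cols_mult[OF X V] cols image_image ..
  also have "\<dots> = colv L ` flip_exp j ` E"
    unfolding image_image using E Xmat_mult_colv[OF _ j] by (intro image_cong) auto
  finally show ?thesis .
qed

lemma inj_on_colv:
  assumes "(2::'a::field) \<noteq> 0"
  shows "inj_on (colv L :: nat list \<Rightarrow> 'a vec) (expvecs L)"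
proof (rule inj_onI, rule ccontr)
  fix xs ys assume xs: "xs \<in> expvecs L" and ys: "ys \<in> expvecs L"
    and eq: "(colv L xs :: 'a vec) = colv L ys" and ne: "xs \<noteq> ys"
  have "(2::'a) ^ L = colv L xs \<bullet> colv L xs"
    by (simp add: inner_colv walsh_square)
  also have "\<dots> = colv L xs \<bullet> colv L ys"
    by (simp add: eq)
  also have "\<dots> = 0"
    using walsh_orthogonal[OF xs ys ne] by (simp add: inner_colv)
  finally show False using assms by simp
qed

lemma rank_eq_card_if_cols_colv:
  fixes A :: "'a::field mat"
  assumes two: "(2::'a) \<noteq> 0" and A: "A \<in> carrier_mat (2^L) nc"
    and E: "E \<subseteq> expvecs L" and cols: "set (cols A) = colv L ` E"
  shows "vec_space.rank (2^L) A = card E"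
proof -
  interpret vec_space "TYPE('a)" "2^L" .
  have "lin_indpt (set (cols A))"
    unfolding cols
  proof (rule lin_indpt_orthogonal)
    show "finite (colv L ` E)"
      using E finite_expvecs finite_subset by blast
    show "u \<bullet> w = 0" if uw: "u \<in> colv L ` E" "w \<in> colv L ` E" and ne: "u \<noteq> w" for u w :: "'a vec"
    proof -
      obtain xs ys where xs: "xs \<in> E" and ys: "ys \<in> E" and "u = colv L xs" "w = colv L ys"
        using uw by blast
      then have "u \<bullet> w = (\<Sum>r<2^L. walsh L xs r * walsh L ys r)"
        by (simp add: inner_colv)
      also have "\<dots> = 0"
        using xs ys ne E \<open>u = colv L xs\<close> \<open>w = colv L ys\<close> by (intro walsh_orthogonal) auto
      finally show ?thesis .
    qed
    show "w \<bullet> w \<noteq> 0" if "w \<in> colv L ` E" for w :: "'a vec"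
      using that two by (auto simp: inner_colv walsh_square)
  qed (auto simp: colv_carrier_vec)
  then have "rank A = card (colv L ` E :: 'a vec set)"
    using rank_eq_card_cols_if_lin_indpt[OF A] cols by simp
  also have "\<dots> = card E"
    using card_image inj_on_subset[OF inj_on_colv[OF two] E] by blast
  finally show ?thesis .
qed

lemma latt_eq_if_cols_colv:
  fixes M :: "'a::field mat"
  assumes two: "(2::'a) \<noteq> 0" and E: "E \<subseteq> expvecs L" and cols: "set (cols M) = colv L ` E"
  shows "latt L M = E"
  unfolding latt_def cols using E inj_on_image_mem_iff[OF inj_on_colv[OF two]] by blast

theorem lemma2:
  fixes V :: "'a::{field,finite} mat" and L i j :: nat
  assumes char: "odd CHAR('a)"
    and L: "L \<ge> 1"
    and i: "i \<in> {1..L}" and j: "j \<in> {1..L}"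
    and Vdim: "V \<in> carrier_mat (2^L) (2^L div 2)"
    and Vcols: "set (cols V) = Vset L i"
  shows "vec_space.rank (2^L) (hcat V (Xmat L j * V)) = card (latt L V \<union> latt L (Xmat L j * V))
       \<and> card (latt L V \<union> latt L (Xmat L j * V)) = (if i = j then 2^L else 2^L div 2)"
proof -
  let ?X = "Xmat L j :: 'a mat" and ?Z = "expvecs_zero L i"
  have two: "(2::'a) \<noteq> 0"
    using char by (rule two_neq_zero_if_odd_CHAR)
  have flip_Z: "flip_exp j ` ?Z \<subseteq> expvecs L"
    using expvecs_zero_subset flip_exp_in_expvecs[OF _ j] by blast
  have XV: "?X * V \<in> carrier_mat (2^L) (2^L div 2)"
    using j mult_carrier_mat[OF Xmat_carrier_mat Vdim] by simp
  have cols_V: "set (cols V) = colv L ` ?Z"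
    using Vcols by (auto simp: Vset_def expvecs_zero_def)
  have cols_XV: "set (cols (?X * V)) = colv L ` flip_exp j ` ?Z"
    using set_cols_Xmat_mult[OF j Vdim expvecs_zero_subset cols_V] .
  have "vec_space.rank (2^L) (hcat V (?X * V)) = card (?Z \<union> flip_exp j ` ?Z)"
    using two hcat_carrier_mat[OF Vdim XV] expvecs_zero_subset flip_Z
    by (intro rank_eq_card_if_cols_colv) (auto simp: set_cols_hcat[OF Vdim XV] cols_V cols_XV)
  moreover have "latt L V \<union> latt L (?X * V) = ?Z \<union> flip_exp j ` ?Z"
    using latt_eq_if_cols_colv[OF two expvecs_zero_subset cols_V]
      latt_eq_if_cols_colv[OF two flip_Z cols_XV] by simp
  ultimately show ?thesis
    using card_expvecs_zero_Un_flip_exp[OF i j] by simp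
qed

end
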